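(* (1) Every PP-rich set in $(\mathbb{N},+)$ contains a family of $2^\omega$ almost disjoint subsets each of which is PP-rich. (2) Every PP-rich set in $(\mathbb{N},+)$ can be split into $\omega$ pairwise disjoint subsets each of which is PP-rich.
   Context: $\mathbb{N}=\{1,2,\dots\}$. $\mathbb{P}$ denotes the set of polynomials with coefficients in $\mathbb{N}\cup\{0\}$ and zero constant term which map $\mathbb{N}$ into $\mathbb{N}$; $\mathcal{P}_f(\mathbb{P})$ is the set of nonempty finite subsets of $\mathbb{P}$. $A\subseteq\mathbb{N}$ is PP-rich if for every $R\in\mathcal{P}_f(\mathbb{P})$ there exist $a,x\in\mathbb{N}$ with $\{a+f(x): f\in R\}\subseteq A$. For an infinite set $X$, a family of almost disjoint subsets of $X$ consists of subsets of $X$ of cardinality $|X|$ any two distinct of which meet in a set of cardinality less than $|X|$. *)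

theory Defs
  imports "HOL-Computational_Algebra.Polynomial" "HOL-Library.Equipollence"
begin

definition PPolys :: "nat poly set" where
  "PPolys = {p. poly p 0 = 0 \<and> (\<forall>n::nat. n \<ge> 1 \<longrightarrow> poly p n \<ge> 1)}"

definition PP_rich :: "nat set \<Rightarrow> bool" where
  "PP_rich A \<longleftrightarrow> (\<forall>R. finite R \<and> R \<noteq> {} \<and> R \<subseteq> PPolys \<longrightarrow>
      (\<exists>a x::nat. a \<ge> 1 \<and> x \<ge> 1 \<and> (\<forall>f\<in>R. a + poly f x \<in> A)))"

end

theory Submission
  imports Defs "HOL-Library.Countable_Set" "HOL-Library.Disjoint_Sets"
begin

text \<open>
  Removing finitely many points preserves PP-richness: replacing each \<open>f \<in> R\<close> by
  \<open>f(c x)\<close> with \<open>c > max F\<close> pushes every point \<open>a + f(c x)\<close> of a configuration above \<open>F\<close>.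
  Hence, for any sequence of patterns \<open>Q i \<in> \<P>\<^sub>f(\<bbbP>)\<close>, configurations \<open>W i \<subseteq> A\<close> for
  \<open>Q i\<close> can be chosen greedily, each avoiding the finitely many points used before, so
  that the \<open>W i\<close> are finite and pairwise disjoint. A union of \<open>W i\<close> over indices whose
  patterns exhaust \<open>\<P>\<^sub>f(\<bbbP>)\<close> is PP-rich.

  For (1), index by the nodes of the binary tree, giving every node of depth \<open>k\<close> the
  \<open>k\<close>-th pattern: the unions along the \<open>2\<^sup>\<omega>\<close> branches are PP-rich, and two of them
  meet in a finite set because two branches share only finitely many nodes.
  For (2), index by pairs \<open>(i, r)\<close>, let \<open>D i\<close> collect the \<open>W (i, r)\<close>, and add the
  rest of \<open>A\<close> to \<open>D 0\<close>.
\<close>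

lemma PPolys_poly_ge:
  assumes "f \<in> PPolys" "1 \<le> y"
  shows "y \<le> poly f y"
proof -
  obtain c p where f: "f = pCons c p" by (cases f) auto
  have "c = 0" using assms(1) f by (simp add: PPolys_def)
  then have "poly f y = y * poly p y" using f by simp
  moreover have "poly f y \<ge> 1" using assms by (simp add: PPolys_def)
  ultimately show ?thesis by (cases "poly p y") auto
qed

lemma PPolys_pcompose_scale:
  assumes "f \<in> PPolys" "1 \<le> c"
  shows "f \<circ>\<^sub>p [:0, c:] \<in> PPolys"
  using assms by (auto simp: PPolys_def poly_pcompose)

definition Pf_PPolys :: "nat poly set set" where
  "Pf_PPolys = {R. finite R \<and> R \<noteq> {} \<and> R \<subseteq> PPolys}"

definition has_config :: "nat set \<Rightarrow> nat poly set \<Rightarrow> bool" where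
  "has_config B R \<longleftrightarrow> (\<exists>a x::nat. a \<ge> 1 \<and> x \<ge> 1 \<and> (\<forall>f\<in>R. a + poly f x \<in> B))"

lemma PP_rich_iff_has_config: "PP_rich A \<longleftrightarrow> (\<forall>R\<in>Pf_PPolys. has_config A R)"
  by (auto simp: PP_rich_def Pf_PPolys_def has_config_def)

lemma has_config_mono: "has_config B R \<Longrightarrow> B \<subseteq> C \<Longrightarrow> has_config C R"
  unfolding has_config_def by blast

lemma PP_rich_mono: "PP_rich A \<Longrightarrow> A \<subseteq> B \<Longrightarrow> PP_rich B"
  by (meson PP_rich_iff_has_config has_config_mono)

lemma has_config_finite_subset:
  assumes "has_config B R" "finite R"
  obtains C where "C \<subseteq> B" "finite C" "has_config C R"
proof -
  obtain a x where ax: "a \<ge> 1" "x \<ge> 1" "\<forall>f\<in>R. a + poly f x \<in> B"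
    using assms(1) unfolding has_config_def by blast
  show thesis
  proof
    show "(\<lambda>f. a + poly f x) ` R \<subseteq> B" "finite ((\<lambda>f. a + poly f x) ` R)"
      using ax assms(2) by auto
    show "has_config ((\<lambda>f. a + poly f x) ` R) R"
      using ax unfolding has_config_def by blast
  qed
qed

lemma countable_Pf_PPolys: "countable Pf_PPolys"
proof -
  have "countable (UNIV :: nat poly set)"
    by (rule countable_image_inj_on[where f = coeffs]) (auto simp: inj_on_def coeffs_eq_iff)
  then have "countable {R. finite R \<and> R \<subseteq> (UNIV :: nat poly set)}"
    by (rule countable_Collect_finite_subset)
  then show ?thesis
    by (rule countable_subset[rotated]) (auto simp: Pf_PPolys_def)
qed

lemma singleton_pX_in_Pf_PPolys: "{[:0, 1:]} \<in> Pf_PPolys"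
  by (auto simp: Pf_PPolys_def PPolys_def)

lemma range_enumeration_Pf_PPolys:
  obtains e :: "nat \<Rightarrow> nat poly set" where "range e = Pf_PPolys"
proof
  show "range (from_nat_into Pf_PPolys) = Pf_PPolys"
    using countable_Pf_PPolys singleton_pX_in_Pf_PPolys by (intro range_from_nat_into) auto
qed

lemma PP_rich_above:
  assumes "PP_rich A"
  shows "PP_rich {n\<in>A. m < n}"
  unfolding PP_rich_iff_has_config
proof
  fix R assume R: "R \<in> Pf_PPolys"
  define c where "c = Suc m"
  have scale: "poly (f \<circ>\<^sub>p [:0, c:]) x = poly f (c * x)" for f x
    by (simp add: poly_pcompose mult.commute)
  have "(\<lambda>f. f \<circ>\<^sub>p [:0, c:]) ` R \<in> Pf_PPolys"
    using R PPolys_pcompose_scale[of _ c] by (auto simp: Pf_PPolys_def c_def)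
  then obtain a x where ax: "a \<ge> 1" "x \<ge> 1"
    and in_A: "\<forall>g\<in>(\<lambda>f. f \<circ>\<^sub>p [:0, c:]) ` R. a + poly g x \<in> A"
    using assms unfolding PP_rich_iff_has_config has_config_def by blast
  have "a + poly f (c * x) \<in> {n\<in>A. m < n}" if "f \<in> R" for f
  proof (intro CollectI conjI)
    show "a + poly f (c * x) \<in> A" using in_A that by (simp add: scale)
    have "m < c" by (simp add: c_def)
    also have "c \<le> c * x" using ax(2) by simp
    also have "c * x \<le> poly f (c * x)"
      using that R ax(2) PPolys_poly_ge unfolding Pf_PPolys_def c_def by force
    also have "\<dots> \<le> a + poly f (c * x)" by simp
    finally show "m < a + poly f (c * x)" .
  qed
  moreover have "1 \<le> c * x" using ax(2) by (simp add: c_def)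
  ultimately show "has_config {n\<in>A. m < n} R"
    unfolding has_config_def using ax(1) by blast
qed

lemma PP_rich_Diff_finite:
  assumes "PP_rich A" "finite F"
  shows "PP_rich (A - F)"
proof (rule PP_rich_mono)
  show "PP_rich {n\<in>A. Max F < n}" using assms(1) by (rule PP_rich_above)
  show "{n\<in>A. Max F < n} \<subseteq> A - F" using assms(2) by (auto dest: Max_ge)
qed

lemma PP_rich_infinite:
  assumes "PP_rich A"
  shows "infinite A"
proof
  assume "finite A"
  with assms have "PP_rich {}" using PP_rich_Diff_finite by fastforce
  then have "has_config {} {[:0, 1:]}"
    using singleton_pX_in_Pf_PPolys unfolding PP_rich_iff_has_config by blast
  then show False by (simp add: has_config_def)
qed

lemma PP_rich_disjoint_configs_nat:
  fixes Q :: "nat \<Rightarrow> nat poly set"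
  assumes "PP_rich A" "\<And>n. Q n \<in> Pf_PPolys"
  obtains W where "\<And>n. W n \<subseteq> A" "\<And>n. finite (W n)" "\<And>n. has_config (W n) (Q n)"
    "disjoint_family W"
proof -
  have "\<exists>C. C \<subseteq> A - F \<and> finite C \<and> has_config C (Q n)" if "finite F" for F n
  proof -
    have "has_config (A - F) (Q n)"
      using PP_rich_Diff_finite[OF assms(1) that] assms(2) unfolding PP_rich_iff_has_config by blast
    moreover have "finite (Q n)" using assms(2) by (simp add: Pf_PPolys_def)
    ultimately show ?thesis by (blast elim: has_config_finite_subset)
  qed
  then obtain pick where pick: "\<And>F n. finite F \<Longrightarrow>
      pick F n \<subseteq> A - F \<and> finite (pick F n) \<and> has_config (pick F n) (Q n)"
    by metis
  \<comment> \<open>\<open>U n\<close> is the set of points used by \<open>W 0, \<dots>, W (n - 1)\<close>.\<close>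
  define U where "U = rec_nat {} (\<lambda>n U. U \<union> pick U n)"
  have U_0: "U 0 = {}" and U_Suc: "U (Suc n) = U n \<union> pick (U n) n" for n
    by (simp_all add: U_def)
  have U_finite: "finite (U n)" for n
    by (induction n) (simp_all add: U_0 U_Suc pick)
  define W where "W n = pick (U n) n" for n
  have W_sub_U: "W m \<subseteq> U n" if "m < n" for m n
    using that by (induction n) (auto simp: U_Suc W_def less_Suc_eq)
  have W_notin_U: "W n \<inter> U n = {}" for n
    using pick[OF U_finite] by (auto simp: W_def)
  show thesis
  proof
    show "W n \<subseteq> A" "finite (W n)" "has_config (W n) (Q n)" for n
      using pick[OF U_finite] by (auto simp: W_def)
    show "disjoint_family W"
      unfolding disjoint_family_on_def
    proof (intro ballI impI)
      fix m n :: nat assume "m \<noteq> n"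
      then consider "m < n" | "n < m" by linarith
      then show "W m \<inter> W n = {}"
        using W_sub_U W_notin_U by cases blast+
    qed
  qed
qed

lemma PP_rich_disjoint_configs:
  fixes Q :: "'i::countable \<Rightarrow> nat poly set"
  assumes "PP_rich A" "\<And>i. Q i \<in> Pf_PPolys"
  obtains W where "\<And>i. W i \<subseteq> A" "\<And>i. finite (W i)" "\<And>i. has_config (W i) (Q i)"
    "disjoint_family W"
proof -
  obtain V where V: "\<And>n. V n \<subseteq> A" "\<And>n. finite (V n)" "\<And>n. has_config (V n) (Q (from_nat n))"
    "disjoint_family V"
    using PP_rich_disjoint_configs_nat[OF assms(1), of "Q \<circ> from_nat"] assms(2) by auto
  show thesis
  proof (rule that[of "V \<circ> to_nat"])
    show "has_config ((V \<circ> to_nat) i) (Q i)" for i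
      using V(3)[of "to_nat i"] by simp
  qed (use V in \<open>auto simp: disjoint_family_on_def\<close>)
qed

lemma PP_rich_UN_configs:
  assumes "\<And>i. i \<in> S \<Longrightarrow> has_config (W i) (Q i)" "Pf_PPolys \<subseteq> Q ` S"
  shows "PP_rich (\<Union>i\<in>S. W i)"
  unfolding PP_rich_iff_has_config
proof
  fix R assume "R \<in> Pf_PPolys"
  then obtain i where "i \<in> S" "R = Q i" using assms(2) by blast
  then show "has_config (\<Union>i\<in>S. W i) R"
    using assms(1) has_config_mono by blast
qed

lemma UN_Int_UN_disjoint_family:
  assumes "disjoint_family W"
  shows "(\<Union>i\<in>S. W i) \<inter> (\<Union>i\<in>T. W i) = (\<Union>i\<in>S \<inter> T. W i)"
proof
  show "(\<Union>i\<in>S. W i) \<inter> (\<Union>i\<in>T. W i) \<subseteq> (\<Union>i\<in>S \<inter> T. W i)"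
  proof
    fix x assume "x \<in> (\<Union>i\<in>S. W i) \<inter> (\<Union>i\<in>T. W i)"
    then obtain i j where ij: "i \<in> S" "j \<in> T" "x \<in> W i" "x \<in> W j" by blast
    then have "i = j" using disjoint_family_onD[OF assms] by blast
    with ij show "x \<in> (\<Union>i\<in>S \<inter> T. W i)" by blast
  qed
qed blast

definition branch :: "(nat \<Rightarrow> 'a) \<Rightarrow> 'a list set" where
  "branch b = range (\<lambda>k. map b [0..<k])"

lemma branch_Int_finite:
  assumes "b \<noteq> c"
  shows "finite (branch b \<inter> branch c)"
proof -
  obtain j where j: "b j \<noteq> c j" using assms by blast
  have "branch b \<inter> branch c \<subseteq> (\<lambda>k. map b [0..<k]) ` {..j}"
  proof
    fix s assume "s \<in> branch b \<inter> branch c"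
    then obtain k k' where s: "s = map b [0..<k]" "s = map c [0..<k']"
      unfolding branch_def by blast
    then have "k = k'" by (metis length_map length_upt diff_zero)
    have "k \<le> j"
    proof (rule ccontr)
      assume "\<not> k \<le> j"
      then have "s ! j = b j" "s ! j = c j" using s \<open>k = k'\<close> by auto
      with j show False by simp
    qed
    then show "s \<in> (\<lambda>k. map b [0..<k]) ` {..j}" using s by blast
  qed
  then show ?thesis by (rule finite_subset) simp
qed

lemma UNIV_fun_bool_eqpoll_UNIV_set: "(UNIV :: ('a \<Rightarrow> bool) set) \<approx> (UNIV :: 'a set set)"
  unfolding eqpoll_def by (rule exI, rule bij_betwI[where g = "\<lambda>S x. x \<in> S"]) auto

lemma disjoint_family_absorb_remainder:
  assumes "disjoint_family D" "\<And>i. D i \<subseteq> A"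
  shows "(\<Union>i. (D(k := D k \<union> (A - (\<Union>j. D j)))) i) = A"
    and "disjoint_family (D(k := D k \<union> (A - (\<Union>j. D j))))"
proof -
  let ?R = "A - (\<Union>j. D j)"
  have "(\<Union>i. (D(k := D k \<union> ?R)) i) \<subseteq> A"
    using assms(2) by (simp add: UN_least)
  moreover have "A \<subseteq> (\<Union>i. (D(k := D k \<union> ?R)) i)"
  proof
    fix x assume "x \<in> A"
    show "x \<in> (\<Union>i. (D(k := D k \<union> ?R)) i)"
    proof (cases "\<exists>i. x \<in> D i")
      case True
      then obtain i where "x \<in> D i" by blast
      then show ?thesis by (cases "i = k") auto
    next
      case False
      with \<open>x \<in> A\<close> show ?thesis by auto
    qed
  qed
  ultimately show "(\<Union>i. (D(k := D k \<union> ?R)) i) = A" ..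
  show "disjoint_family (D(k := D k \<union> ?R))"
    using assms(1) unfolding disjoint_family_on_def by auto
qed

lemma PP_rich_almost_disjoint_family:
  assumes "PP_rich A"
  shows "\<exists>F :: nat set set. F \<approx> (UNIV :: nat set set) \<and>
           (\<forall>B\<in>F. B \<subseteq> A \<and> infinite B \<and> PP_rich B) \<and>
           (\<forall>B\<in>F. \<forall>C\<in>F. B \<noteq> C \<longrightarrow> finite (B \<inter> C))"
proof -
  obtain e :: "nat \<Rightarrow> nat poly set" where e: "range e = Pf_PPolys"
    by (rule range_enumeration_Pf_PPolys)
  then have "e n \<in> Pf_PPolys" for n by (metis rangeI)
  then obtain W :: "bool list \<Rightarrow> nat set"
    where W: "\<And>s. W s \<subseteq> A" "\<And>s. finite (W s)" "\<And>s. has_config (W s) (e (length s))"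
      "disjoint_family W"
    by (rule PP_rich_disjoint_configs[OF assms, where Q = "\<lambda>s. e (length s)"]) blast
  define B where "B b = (\<Union>s\<in>branch b. W s)" for b
  have B_sub: "B b \<subseteq> A" for b
    using W(1) by (auto simp: B_def)
  have B_rich: "PP_rich (B b)" for b
  proof -
    have "Pf_PPolys \<subseteq> (\<lambda>s. e (length s)) ` branch b"
    proof
      fix R assume "R \<in> Pf_PPolys"
      then obtain r where "R = e r" using e by blast
      moreover have "map b [0..<r] \<in> branch b" by (simp add: branch_def)
      ultimately show "R \<in> (\<lambda>s. e (length s)) ` branch b" by force
    qed
    then show ?thesis unfolding B_def by (rule PP_rich_UN_configs[OF W(3)])
  qed
  have B_almost_disjoint: "finite (B b \<inter> B c)" if "b \<noteq> c" for b c
    using branch_Int_finite[OF that] W(2)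
    by (simp add: B_def UN_Int_UN_disjoint_family[OF W(4)])
  have "inj B"
  proof (rule injI, rule ccontr)
    fix b c assume "B b = B c" "b \<noteq> c"
    then have "finite (B b)" using B_almost_disjoint[of b c] by simp
    then show False using B_rich PP_rich_infinite by blast
  qed
  then have "range B \<approx> (UNIV :: (nat \<Rightarrow> bool) set)"
    by (meson eqpoll_sym inj_on_image_eqpoll_self)
  also have "\<dots> \<approx> (UNIV :: nat set set)"
    by (rule UNIV_fun_bool_eqpoll_UNIV_set)
  finally have "range B \<approx> (UNIV :: nat set set)" .
  moreover have "\<forall>X\<in>range B. X \<subseteq> A \<and> infinite X \<and> PP_rich X"
    using B_sub B_rich PP_rich_infinite by blast
  moreover have "finite (X \<inter> Y)" if XY: "X \<in> range B" "Y \<in> range B" "X \<noteq> Y" for X Y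
  proof -
    obtain b c where "X = B b" "Y = B c" using XY(1,2) by blast
    moreover from this have "b \<noteq> c" using XY(3) by blast
    ultimately show ?thesis using B_almost_disjoint by simp
  qed
  ultimately show ?thesis by blast
qed

lemma PP_rich_partition:
  assumes "PP_rich A"
  shows "\<exists>D :: nat \<Rightarrow> nat set. (\<Union>i. D i) = A \<and> disjoint_family D \<and> (\<forall>i. PP_rich (D i))"
proof -
  obtain e :: "nat \<Rightarrow> nat poly set" where e: "range e = Pf_PPolys"
    by (rule range_enumeration_Pf_PPolys)
  then have "e n \<in> Pf_PPolys" for n by (metis rangeI)
  then obtain W :: "nat \<times> nat \<Rightarrow> nat set"
    where W: "\<And>p. W p \<subseteq> A" "\<And>p. has_config (W p) (e (snd p))" "disjoint_family W"
    by (rule PP_rich_disjoint_configs[OF assms, where Q = "\<lambda>p. e (snd p)"]) blast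
  define D where "D i = (\<Union>p\<in>{i} \<times> UNIV. W p)" for i
  have D_rich: "PP_rich (D i)" for i
  proof -
    have "Pf_PPolys \<subseteq> (\<lambda>p. e (snd p)) ` ({i} \<times> UNIV)"
    proof
      fix R assume "R \<in> Pf_PPolys"
      then obtain r where "R = e r" using e by blast
      then show "R \<in> (\<lambda>p. e (snd p)) ` ({i} \<times> UNIV)"
        by (intro image_eqI[of _ _ "(i, r)"]) simp_all
    qed
    then show ?thesis unfolding D_def by (rule PP_rich_UN_configs[OF W(2)])
  qed
  have "disjoint_family D"
    unfolding disjoint_family_on_def D_def UN_Int_UN_disjoint_family[OF W(3)] by auto
  moreover have "D i \<subseteq> A" for i
    using W(1) by (auto simp: D_def)
  moreover have "PP_rich ((D(0 := D 0 \<union> (A - (\<Union>j. D j)))) i)" for i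
    using D_rich PP_rich_mono[OF D_rich[of 0]] by simp
  ultimately show ?thesis
    using disjoint_family_absorb_remainder[of D A 0] by blast
qed

theorem theorem5p7:
  fixes A :: "nat set"
  assumes "A \<subseteq> {1..}" and "PP_rich A"
  shows "(\<exists>F :: nat set set. F \<approx> (UNIV :: nat set set) \<and>
            (\<forall>B\<in>F. B \<subseteq> A \<and> infinite B \<and> PP_rich B) \<and>
            (\<forall>B\<in>F. \<forall>C\<in>F. B \<noteq> C \<longrightarrow> finite (B \<inter> C)))
       \<and> (\<exists>D :: nat \<Rightarrow> nat set. (\<Union>i. D i) = A \<and>
            (\<forall>i j. i \<noteq> j \<longrightarrow> D i \<inter> D j = {}) \<and>
            (\<forall>i. PP_rich (D i)))"
  using PP_rich_almost_disjoint_family[OF assms(2)] PP_rich_partition[OF assms(2)]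
  by (simp add: disjoint_family_on_def)

end
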